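(* On the étale cover $\tilde U$ (see context), with the lifted Poisson bracket, one has $\{x_i,x_j\}=0$, $\{y_i,y_j\}=0$ and $\{x_i,y_j\}=\delta_{ij}y_j$ for all $1\le i,j\le d$.
   Context: Let $V=\mathbb C^d$ and let $\mathfrak a=(\mathfrak{gl}(V)\ltimes V)\oplus(\mathfrak{gl}(V)\ltimes V^* )$ with basis $e_{ij}$, $e'_{ij}$ (matrix units of the two copies of $\mathfrak{gl}(V)$), $q_i$ (basis of $V$), $p_i$ (basis of $V^*$), with the standard $\mathfrak{gl}$ brackets, $[e_{ij},q_k]=\delta_{jk}q_i$, $[e'_{ij},p_k]=-\delta_{ki}p_j$, and all other brackets of basis elements zero. Let $\mathbb C[\mathfrak Z_d]:=\big(S(\mathfrak a)/S(\mathfrak a)\mathfrak{gl}(V)_{\rm diag}\big)^{\mathfrak{gl}(V)_{\rm diag}}\cong\mathbb C[e_{ij},q_i,p_i]^{\mathfrak{gl}(V)}$, with the Poisson bracket induced from the Lie–Poisson bracket on $S(\mathfrak a)$, where $\mathfrak{gl}(V)_{\rm diag}$ is spanned by $e_{ij}+e'_{ij}$; $\mathfrak Z_d=\operatorname{Spec}\mathbb C[\mathfrak Z_d]$. Let $a_r=\operatorname{Tr}A^r$ where $A=(e_{ij})$, and $b_s=\sum p_{i_1}e_{i_1i_2}\cdots e_{i_si_{s+1}}q_{i_{s+1}}$. Let $U\subset\mathfrak Z_d$ be the open subset where $A$ has $d$ distinct eigenvalues, and $\tilde U\to U$ the étale cover given by orderings of the eigenvalues; the Poisson bracket lifts uniquely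 to $\tilde U$. On $\tilde U$ let $x_1,\dots,x_d$ be the ordered eigenvalues (so $a_r=\sum_i x_i^r$) and $y_i=\sum_{r=0}^{d-1}(-1)^r\sigma_r(x_1,\dots,\widehat{x_i},\dots,x_d)\,b_{d-1-r}$, where $\sigma_r$ is the $r$-th elementary symmetric function. *)

theory Defs
  imports "HOL-Analysis.Analysis"
begin

text \<open>A point of the (unreduced) space: a triple (A, q, p) where A = (e_ij) is a
 d x d complex matrix, q = (q_i), p = (p_i).  Indices range over a finite type 'd
 with CARD('d) = d.\<close>

type_synonym 'd pt = "(complex^'d^'d) \<times> (complex^'d) \<times> (complex^'d)"

definition Amat :: "'d::finite pt \<Rightarrow> complex^'d^'d" where "Amat z = fst z"
definition qvec :: "'d::finite pt \<Rightarrow> complex^'d" where "qvec z = fst (snd z)"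
definition pvec :: "'d::finite pt \<Rightarrow> complex^'d" where "pvec z = snd (snd z)"

fun mpow :: "'a::comm_ring_1^'n^'n \<Rightarrow> nat \<Rightarrow> 'a^'n^'n" where
  "mpow M 0 = mat 1"
| "mpow M (Suc n) = M ** mpow M n"

definition a_fun :: "nat \<Rightarrow> 'd::finite pt \<Rightarrow> complex" where
  "a_fun r z = (\<Sum>i\<in>UNIV. mpow (Amat z) r $ i $ i)"

definition b_fun :: "nat \<Rightarrow> 'd::finite pt \<Rightarrow> complex" where
  "b_fun s z = (\<Sum>i\<in>UNIV. \<Sum>j\<in>UNIV. pvec z $ i * mpow (Amat z) s $ i $ j * qvec z $ j)"

definition esym :: "nat \<Rightarrow> 'i set \<Rightarrow> ('i \<Rightarrow> complex) \<Rightarrow> complex" where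
  "esym r I c = (\<Sum>T | T \<subseteq> I \<and> card T = r. \<Prod>k\<in>T. c k)"

definition y_fun :: "('d::finite \<Rightarrow> 'd pt \<Rightarrow> complex) \<Rightarrow> 'd \<Rightarrow> 'd pt \<Rightarrow> complex" where
  "y_fun x i z = (\<Sum>r<CARD('d). (-1)^r * esym r (UNIV - {i}) (\<lambda>k. x k z)
                      * b_fun (CARD('d) - 1 - r) z)"

definition Edir :: "'d::finite \<Rightarrow> 'd \<Rightarrow> 'd pt" where
  "Edir i j = ((\<chi> k l. if k = i \<and> l = j then 1 else 0), 0, 0)"
definition Qdir :: "'d::finite \<Rightarrow> 'd pt" where
  "Qdir k = (0, axis k 1, 0)"

text \<open>The reduced Lie--Poisson bracket on gl(V)-invariant functions of (e_ij, q_i, p_i):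
 the functions are lifted to S(a) as functions of e, q, p only (no e'), so p_i
 Poisson-commutes with all variables occurring, and
 {F,G} = sum dF/de_ij dG/de_kl (delta_jk e_il - delta_li e_kj)
        + sum (dF/de_ij dG/dq_k - dG/de_ij dF/dq_k) delta_jk q_i.\<close>
definition pbracket :: "('d::finite pt \<Rightarrow> complex) \<Rightarrow> ('d pt \<Rightarrow> complex) \<Rightarrow> 'd pt \<Rightarrow> complex" where
  "pbracket F G z =
     (let dF = frechet_derivative F (at z); dG = frechet_derivative G (at z); A = Amat z in
      (\<Sum>i\<in>UNIV. \<Sum>j\<in>UNIV. \<Sum>k\<in>UNIV. \<Sum>l\<in>UNIV.
          dF (Edir i j) * dG (Edir k l) *
          ((if j = k then A $ i $ l else 0) - (if l = i then A $ k $ j else 0)))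
    + (\<Sum>i\<in>UNIV. \<Sum>j\<in>UNIV.
          (dF (Edir i j) * dG (Qdir j) - dG (Edir i j) * dF (Qdir j)) * qvec z $ i))"

end

theory Submission
  imports Defs
begin

text \<open>Where A has distinct eigenvalues x_1, ..., x_d, differentiating det (t - A) = \<Prod>_i (t - x_i)
  shows that the A-gradient of x_i is the spectral projection N_i onto the x_i-eigenline, and that
  x_i does not depend on q. By Vieta, y_j = p P_j q with P_j = \<Prod>_{k \<noteq> j} (A - x_k) = c_j N_j,
  c_j = \<Prod>_{k \<noteq> j} (x_j - x_k). In matrix form the bracket is
  {F, G} = tr ([\<nabla>_A F, A] \<nabla>_A G) + \<langle>\<nabla>_q G, \<nabla>_A F q\<rangle> - \<langle>\<nabla>_q F, \<nabla>_A G q\<rangle>.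
  As N_i commutes with A and \<nabla>_q x_i = 0, this gives {x_i, x_j} = 0 and
  {x_i, y_j} = p P_j N_i q = \<delta>_ij y_j. For {y_i, y_j} the derivative of P_j is computed blockwise
  with respect to 1 = \<Sum>_k N_k by differentiating A P_j = x_j P_j, P_j A = x_j P_j and
  P_j^2 = c_j P_j; the resulting gradient of y_i has commutator q (p P_i) - (P_i q) p with A, and
  the surviving terms cancel because P_i P_j = 0 for i \<noteq> j.\<close>

section \<open>Linear algebra\<close>

lemma sum_UNIV_eq_single:
  fixes F :: "'i::finite \<Rightarrow> 'a::comm_monoid_add"
  assumes "\<And>i. i \<noteq> k \<Longrightarrow> F i = 0"
  shows "(\<Sum>i\<in>UNIV. F i) = F k"
proof -
  have "(\<Sum>i\<in>UNIV. F i) = F k + (\<Sum>i\<in>UNIV-{k}. F i)"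
    by (rule sum.remove) auto
  also have "(\<Sum>i\<in>UNIV-{k}. F i) = 0"
    using assms by (intro sum.neutral) auto
  finally show ?thesis
    by simp
qed

lemma sum_Diff_mult_delta:
  fixes f :: "'i::finite \<Rightarrow> 'a::comm_semiring_1"
  assumes "j \<noteq> i"
  shows "(\<Sum>l\<in>UNIV-{i}. f l * (if l = j then a else 0)) = f j * a"
proof -
  have "(\<Sum>l\<in>UNIV-{i}. f l * (if l = j then a else 0)) = (\<Sum>l\<in>UNIV-{i}. if l = j then f l * a else 0)"
    by (rule sum.cong) auto
  then show ?thesis
    using assms by simp
qed

definition scale_mat :: "'a::times \<Rightarrow> 'a^'n^'m \<Rightarrow> 'a^'n^'m" where
  "scale_mat c M = (\<chi> i j. c * M$i$j)"

lemma scale_mat_nth [simp]: "scale_mat c M $ i $ j = c * M $ i $ j"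
  by (simp add: scale_mat_def)

lemma scale_mat_mult_left: "scale_mat c (M::'a::comm_semiring_1^'n^'m) ** B = scale_mat c (M ** B)"
  by (simp add: vec_eq_iff matrix_matrix_mult_def sum_distrib_left mult.assoc)

lemma scale_mat_mult_right: "(A::'a::comm_semiring_1^'n^'m) ** scale_mat c M = scale_mat c (A ** M)"
  by (simp add: vec_eq_iff matrix_matrix_mult_def sum_distrib_left ac_simps)

lemma scale_mat_scale_mat [simp]:
  "scale_mat c (scale_mat d M) = scale_mat (c * d) (M::'a::comm_semiring_1^'n^'m)"
  by (simp add: vec_eq_iff mult.assoc)

lemma scale_mat_1 [simp]: "scale_mat 1 M = (M::'a::comm_semiring_1^'n^'m)"
  by (simp add: vec_eq_iff)

lemma scale_mat_0 [simp]: "scale_mat 0 M = (0::'a::comm_semiring_1^'n^'m)"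
  by (simp add: vec_eq_iff)

lemma scale_mat_zero [simp]: "scale_mat c 0 = (0::'a::comm_semiring_1^'n^'m)"
  by (simp add: vec_eq_iff)

lemma scale_mat_sum:
  "scale_mat c (\<Sum>k\<in>K. f k) = (\<Sum>k\<in>K. scale_mat c (f k :: 'a::comm_semiring_1^'n^'m))"
  by (induct K rule: infinite_finite_induct) (auto simp: vec_eq_iff distrib_left)

lemma sum_scale_mat:
  "(\<Sum>r\<in>R. scale_mat (f r) M) = scale_mat (\<Sum>r\<in>R. f r) (M::'a::comm_semiring_1^'n^'m)"
  by (induct R rule: infinite_finite_induct) (auto simp: vec_eq_iff distrib_right)

lemma scale_mat_diff_left:
  "scale_mat a M - scale_mat b M = scale_mat (a - b) (M::'a::comm_ring_1^'n^'m)"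
  by (simp add: vec_eq_iff left_diff_distrib)

lemma scale_mat_cancel:
  "scale_mat c X = scale_mat c Y \<Longrightarrow> c \<noteq> 0 \<Longrightarrow> X = (Y::'a::idom^'n^'m)"
  by (simp add: vec_eq_iff)

lemma matrix_add_rdistrib: "(B + C) ** (A::'a::comm_semiring_1^'n^'m) = B ** A + C ** A"
  by (simp add: vec_eq_iff matrix_matrix_mult_def distrib_right sum.distrib)

lemma matrix_diff_rdistrib: "(B - C) ** (A::'a::comm_ring_1^'n^'m) = B ** A - C ** A"
  by (simp add: vec_eq_iff matrix_matrix_mult_def left_diff_distrib sum_subtractf)

lemma matrix_diff_ldistrib: "(A::'a::comm_ring_1^'n^'m) ** (B - C) = A ** B - A ** C"
  by (simp add: vec_eq_iff matrix_matrix_mult_def right_diff_distrib sum_subtractf)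

lemma matrix_mult_sum_right:
  "(A::'a::comm_semiring_1^'n^'m) ** (\<Sum>k\<in>K. f k) = (\<Sum>k\<in>K. A ** f k)"
  by (induct K rule: infinite_finite_induct) (auto simp: matrix_add_ldistrib)

lemma matrix_mult_sum_left:
  "(\<Sum>k\<in>K. f k) ** (B::'a::comm_semiring_1^'n^'m) = (\<Sum>k\<in>K. f k ** B)"
  by (induct K rule: infinite_finite_induct) (auto simp: matrix_add_rdistrib)

lemma scale_mat_mult_vector: "scale_mat c M *v v = c *s (M *v (v::'a::comm_semiring_1^'n::finite))"
  by (simp add: vec_eq_iff matrix_vector_mult_def sum_distrib_left mult_ac)

lemma vector_mult_scale_mat:
  "u v* scale_mat c M = c *s (u v* (M::'a::comm_semiring_1^'n::finite^'m::finite))"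
  by (simp add: vec_eq_iff vector_matrix_mult_def sum_distrib_left mult_ac)

lemma vector_mult_sum:
  "u v* (\<Sum>k\<in>K. f k) = (\<Sum>k\<in>K. u v* (f k :: 'a::comm_semiring_1^'n::finite^'m::finite))"
  by (induct K rule: infinite_finite_induct)
    (auto simp: vec_eq_iff vector_matrix_mult_def distrib_left sum.distrib)

lemma sum_mult_vector:
  "(\<Sum>k\<in>K. f k) *v v = (\<Sum>k\<in>K. (f k :: 'a::comm_semiring_1^'n::finite^'m::finite) *v v)"
  by (induct K rule: infinite_finite_induct) (auto simp: matrix_vector_mult_add_rdistrib)

lemma vector_mult_diff: "u v* (M - M') = u v* M - u v* (M'::'a::comm_ring_1^'n::finite^'m::finite)"
  by (simp add: vec_eq_iff vector_matrix_mult_def right_diff_distrib sum_subtractf)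

lemma diff_mult_vector: "(M - M') *v v = M *v v - (M'::'a::comm_ring_1^'n::finite^'m::finite) *v v"
  by (simp add: vec_eq_iff matrix_vector_mult_def left_diff_distrib sum_subtractf)

lemma commutator_weighted_sum:
  fixes C :: "'k \<Rightarrow> 'a::comm_ring_1^'n^'n"
  assumes "\<And>k. k \<in> K \<Longrightarrow> C k ** A - A ** C k = scale_mat (d k) (C k)"
    and "\<And>k. k \<in> K \<Longrightarrow> w k * d k = e"
  shows "(\<Sum>k\<in>K. scale_mat (w k) (C k)) ** A - A ** (\<Sum>k\<in>K. scale_mat (w k) (C k))
       = scale_mat e (\<Sum>k\<in>K. C k)"
proof -
  have "(\<Sum>k\<in>K. scale_mat (w k) (C k)) ** A - A ** (\<Sum>k\<in>K. scale_mat (w k) (C k))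
      = (\<Sum>k\<in>K. scale_mat (w k) (C k ** A - A ** C k))"
    by (simp add: matrix_mult_sum_left matrix_mult_sum_right scale_mat_mult_left
        scale_mat_mult_right sum_subtractf[symmetric] vec_eq_iff right_diff_distrib)
  also have "\<dots> = (\<Sum>k\<in>K. scale_mat e (C k))"
    using assms by (intro sum.cong) (auto simp: vec_eq_iff mult.assoc[symmetric])
  finally show ?thesis by (simp add: scale_mat_sum)
qed

definition dotp :: "'a::comm_semiring_1^'n \<Rightarrow> 'a^'n \<Rightarrow> 'a" where
  "dotp u v = (\<Sum>i\<in>UNIV. u$i * v$i)"

definition outer :: "'a::times^'n \<Rightarrow> 'a^'m \<Rightarrow> 'a^'m^'n" where
  "outer v u = (\<chi> i k. v$i * u$k)"

definition bilin :: "'a::comm_semiring_1^'n \<Rightarrow> 'a^'m^'n \<Rightarrow> 'a^'m \<Rightarrow> 'a" where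
  "bilin u M v = (\<Sum>a\<in>UNIV. \<Sum>b\<in>UNIV. u$a * M$a$b * v$b)"

definition unit_mat :: "'n \<Rightarrow> 'n \<Rightarrow> 'a::zero_neq_one^'n^'n" where
  "unit_mat a b = (\<chi> k l. if k = a \<and> l = b then 1 else 0)"

lemma dotp_vector_mult: "dotp (u v* M) v = bilin u M (v::'a::comm_semiring_1^'n::finite)"
  by (simp add: dotp_def bilin_def vector_matrix_mult_def sum_distrib_left sum_distrib_right
      mult_ac)
    (rule sum.swap)

lemma dotp_mult_vector: "dotp u (M *v v) = bilin u M (v::'a::comm_semiring_1^'n::finite)"
  by (simp add: dotp_def bilin_def matrix_vector_mult_def sum_distrib_left mult_ac)

lemma bilin_mult_vector:
  "bilin u M (M' *v v) = bilin u (M ** M') (v::'a::comm_semiring_1^'n::finite)"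
  by (simp only: dotp_mult_vector[symmetric] matrix_vector_mul_assoc)

lemma bilin_vector_mult:
  "bilin (u v* M) M' v = bilin u (M ** M') (v::'a::comm_semiring_1^'n::finite)"
  by (simp only: dotp_mult_vector[symmetric] dotp_vector_mult matrix_vector_mul_assoc)

lemma bilin_outer: "bilin u (outer w w') v = dotp u w * dotp w' (v::'a::comm_semiring_1^'n::finite)"
  by (simp add: bilin_def outer_def dotp_def sum_product mult_ac)

lemma bilin_scale_mat:
  "bilin u (scale_mat c M) v = c * bilin u M (v::'a::comm_semiring_1^'n::finite)"
  by (simp add: bilin_def sum_distrib_left mult_ac)

lemma bilin_add: "bilin u (M + M') v = bilin u M v + bilin u M' (v::'a::comm_semiring_1^'n::finite)"
  by (simp add: bilin_def distrib_left distrib_right sum.distrib)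

lemma bilin_diff: "bilin u (M - M') v = bilin u M v - bilin u M' (v::'a::comm_ring_1^'n::finite)"
  by (simp add: bilin_def left_diff_distrib right_diff_distrib sum_subtractf)

lemma bilin_zero [simp]: "bilin u 0 v = 0" and bilin_zero_left [simp]: "bilin 0 M v = 0"
  and bilin_zero_right [simp]: "bilin u M 0 = 0"
  by (simp_all add: bilin_def)

lemma bilin_sum:
  "bilin u (\<Sum>k\<in>K. f k) v = (\<Sum>k\<in>K. bilin u (f k) (v::'a::comm_semiring_1^'n::finite))"
  by (induct K rule: infinite_finite_induct) (auto simp: bilin_add)

lemma bilin_unit_mat: "bilin u (unit_mat a b) v = u$a * (v::'a::comm_semiring_1^'n::finite)$b"
proof -
  have "(\<Sum>b'\<in>UNIV. u$a' * unit_mat a b $ a' $ b' * v$b') = (if a' = a then u$a * v$b else 0)" for a'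
    by (cases "a' = a") (simp_all add: unit_mat_def if_distrib if_distribR cong: if_cong)
  then show ?thesis by (simp add: bilin_def)
qed

lemma bilin_mult_unit_mat_mult:
  "bilin u (X ** unit_mat a b ** Y) v = (u v* X)$a * (Y *v (v::'a::comm_semiring_1^'n::finite))$b"
proof -
  have "bilin u (X ** unit_mat a b ** Y) v = bilin (u v* X) (unit_mat a b) (Y *v v)"
    by (simp add: bilin_vector_mult bilin_mult_vector matrix_mul_assoc)
  then show ?thesis by (simp add: bilin_unit_mat)
qed

lemma trace_outer_mult: "trace (outer v u ** M) = bilin u M (v::'a::comm_semiring_1^'n::finite)"
  by (simp add: trace_def matrix_matrix_mult_def outer_def bilin_def sum_distrib_left mult_ac)
    (rule sum.swap)

lemma outer_mult_right: "outer v u ** A = outer v (u v* (A::'a::comm_semiring_1^'n::finite^'n))"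
  by (simp add: vec_eq_iff outer_def matrix_matrix_mult_def vector_matrix_mult_def sum_distrib_left
      mult_ac)

lemma outer_mult_left: "(A::'a::comm_semiring_1^'n::finite^'n) ** outer v u = outer (A *v v) u"
  by (simp add: vec_eq_iff outer_def matrix_matrix_mult_def matrix_vector_mult_def sum_distrib_left
      sum_distrib_right mult_ac)

lemma outer_scale_left: "outer (c *s v) u = scale_mat c (outer v (u::'a::comm_semiring_1^'n))"
  by (simp add: vec_eq_iff outer_def mult_ac)

lemma outer_scale_right: "outer v (c *s u) = scale_mat c (outer v (u::'a::comm_semiring_1^'n))"
  by (simp add: vec_eq_iff outer_def mult_ac)

lemma outer_diff_left: "outer (v - v') u = outer v u - outer v' (u::'a::comm_ring_1^'n)"
  by (simp add: vec_eq_iff outer_def left_diff_distrib)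

lemma outer_diff_right: "outer v (u - u') = outer v u - outer v (u'::'a::comm_ring_1^'n)"
  by (simp add: vec_eq_iff outer_def right_diff_distrib)

lemma outer_sum_left:
  "outer (\<Sum>k\<in>K. f k) u = (\<Sum>k\<in>K. outer (f k) (u::'a::comm_semiring_1^'n))"
  by (induct K rule: infinite_finite_induct) (auto simp: vec_eq_iff outer_def distrib_right)

lemma outer_sum_right:
  "outer v (\<Sum>k\<in>K. f k) = (\<Sum>k\<in>K. outer v (f k :: 'a::comm_semiring_1^'n))"
  by (induct K rule: infinite_finite_induct) (auto simp: vec_eq_iff outer_def distrib_left)

lemma mat_diff_mult_nth:
  "((mat t - A) ** (M::'a::comm_ring_1^'n::finite^'n)) $ c $ a = t * M $ c $ a - (A ** M) $ c $ a"
proof -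
  have "(mat t ** M) $ c $ a = (\<Sum>k\<in>UNIV. if c = k then t * M$k$a else 0)"
    unfolding matrix_matrix_mult_def mat_def by (simp add: if_distrib if_distribR cong: if_cong)
  then show ?thesis
    by (simp add: matrix_diff_rdistrib)
qed

lemma outer_commutator:
  "outer u v ** A - A ** outer u v = outer u (v v* A) - outer (A *v u) v"
  for v :: "'a::comm_ring_1^'n::finite"
  by (simp add: outer_mult_left outer_mult_right)

definition replace_row :: "'a^'n^'m \<Rightarrow> 'm \<Rightarrow> 'a^'n \<Rightarrow> 'a^'n^'m" where
  "replace_row M a v = (\<chi> i. if i = a then v else M $ i)"

lemma det_sub_scale_unit_mat:
  fixes M :: "'a::comm_ring_1^'n::finite^'n"
  shows "det (M - scale_mat s (unit_mat a b)) = det M - s * det (replace_row M a (axis b 1))"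
proof -
  have "M - scale_mat s (unit_mat a b) = (\<chi> i. if i = a then M$a + (-s) *s axis b 1 else M$i)"
    by (auto simp: vec_eq_iff unit_mat_def axis_def)
  also have "det \<dots> = det (\<chi> i. if i = a then M$a else M$i)
                     + det (\<chi> i. if i = a then (-s) *s axis b 1 else M$i)"
    by (rule det_row_add)
  also have "(\<chi> i. if i = a then M$a else M$i) = M"
    by (simp add: vec_eq_iff)
  also have "det (\<chi> i. if i = a then (-s) *s axis b 1 else M$i)
      = (-s) * det (replace_row M a (axis b 1))"
    unfolding replace_row_def by (rule det_row_mul)
  finally show ?thesis by simp
qed

text \<open>Expansion of the determinant along row a, with the row of M that is paired with the
  cofactors chosen freely: a repeated row gives 0.\<close>
lemma sum_mult_det_replace_row:
  fixes M :: "'a::comm_ring_1^'n::finite^'n"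
  shows "(\<Sum>b\<in>UNIV. M$c$b * det (replace_row M a (axis b 1))) = (if c = a then det M else 0)"
proof -
  have "(\<Sum>b\<in>UNIV. M$c$b * det (replace_row M a (axis b 1)))
      = (\<Sum>b\<in>UNIV. det (\<chi> i. if i = a then M$c$b *s axis b 1 else M$i))"
    unfolding replace_row_def by (rule sum.cong[OF refl], rule det_row_mul[symmetric])
  also have "\<dots> = det (\<chi> i. if i = a then (\<Sum>b\<in>UNIV. M$c$b *s axis b 1) else M$i)"
    by (rule det_linear_row_sum[symmetric]) simp
  also have "(\<Sum>b\<in>UNIV. M$c$b *s axis b 1) = M$c"
    by (rule basis_expansion)
  also have "det (\<chi> i. if i = a then M$c else M$i) = (if c = a then det M else 0)"
  proof (cases "c = a")
    case True
    then have "(\<chi> i. if i = a then M$c else M$i) = M" by (simp add: vec_eq_iff)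
    then show ?thesis using True by simp
  next
    case False
    then show ?thesis
      by (intro trans[OF det_identical_rows[of a c]]) (auto simp: row_def vec_eq_iff)
  qed
  finally show ?thesis .
qed

lemma prod_diff_eq_sum_esym:
  fixes f :: "'i \<Rightarrow> complex"
  assumes K: "finite K"
  shows "(\<Prod>k\<in>K. s - f k) = (\<Sum>r\<le>card K. (-1)^r * esym r K f * s^(card K - r))"
proof -
  have "(\<Prod>k\<in>K. s - f k) = (\<Sum>X\<in>Pow K. (-1) ^ card X * (\<Prod>k\<in>X. f k) * (\<Prod>k\<in>K-X. s))"
    by (rule prod_diff_conv_sum[OF K])
  also have "\<dots> = (\<Sum>X\<in>Pow K. (-1) ^ card X * (\<Prod>k\<in>X. f k) * s ^ (card K - card X))"
    by (rule sum.cong[OF refl]) (use K in \<open>auto simp: card_Diff_subset finite_subset\<close>)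
  also have "\<dots> = (\<Sum>r\<le>card K. \<Sum>X\<in>{X. X \<in> Pow K \<and> card X = r}.
                     (-1) ^ card X * (\<Prod>k\<in>X. f k) * s ^ (card K - card X))"
    by (rule sum.group[symmetric]) (use K in \<open>auto simp: card_mono\<close>)
  also have "\<dots> = (\<Sum>r\<le>card K. (-1)^r * esym r K f * s^(card K - r))"
  proof (rule sum.cong[OF refl])
    fix r
    have "(\<Sum>X\<in>{X. X \<in> Pow K \<and> card X = r}. (-1) ^ card X * (\<Prod>k\<in>X. f k) * s ^ (card K - card X))
        = (\<Sum>X\<in>{T. T \<subseteq> K \<and> card T = r}. (-1) ^ r * s ^ (card K - r) * (\<Prod>k\<in>X. f k))"
      by (rule sum.cong) (auto simp: ac_simps)
    also have "\<dots> = (-1)^r * esym r K f * s^(card K - r)"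
      by (simp add: esym_def sum_distrib_left ac_simps)
    finally show "(\<Sum>X\<in>{X. X \<in> Pow K \<and> card X = r}. (-1) ^ card X * (\<Prod>k\<in>X. f k) * s ^ (card K - card X))
        = (-1)^r * esym r K f * s^(card K - r)" .
  qed
  finally show ?thesis .
qed

lemma prod_remove_diff_eq_sum_esym:
  fixes f :: "'d::finite \<Rightarrow> complex"
  shows "(\<Prod>k\<in>UNIV-{j}. s - f k) =
     (\<Sum>r<CARD('d). (-1)^r * esym r (UNIV-{j}) f * s^(CARD('d) - 1 - r))"
proof -
  have "card (UNIV - {j} :: 'd set) = CARD('d) - 1"
    by (simp add: card_Diff_subset)
  moreover have "0 < CARD('d)"
    by simp
  then have "{..CARD('d) - 1} = {..<CARD('d)}"
    by (cases "CARD('d)") (simp_all add: lessThan_Suc_atMost)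
  ultimately show ?thesis
    using prod_diff_eq_sum_esym[of "UNIV - {j}" s f] by simp
qed

section \<open>Calculus\<close>

lemma differentiable_prod:
  fixes f :: "'i \<Rightarrow> 'a::real_normed_vector \<Rightarrow> 'b::real_normed_field"
  assumes "\<And>i. i \<in> I \<Longrightarrow> f i differentiable (at z)"
  shows "(\<lambda>x. \<Prod>i\<in>I. f i x) differentiable (at z)"
proof -
  from assms obtain f' where "\<And>i. i \<in> I \<Longrightarrow> (f i has_derivative f' i) (at z)"
    unfolding differentiable_def by metis
  then have "((\<lambda>x. \<Prod>i\<in>I. f i x) has_derivative (\<lambda>y. \<Sum>i\<in>I. f' i y * (\<Prod>j\<in>I - {i}. f j z))) (at z)"
    by (rule has_derivative_prod)
  then show ?thesis by (auto simp: differentiable_def)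
qed

lemma has_derivative_along_line:
  assumes "(f has_derivative f') (at z)"
  shows "((\<lambda>s::real. f (z + s *\<^sub>R v)) has_derivative (\<lambda>s. s *\<^sub>R f' v)) (at 0)"
proof -
  have "((\<lambda>s::real. z + s *\<^sub>R v) has_derivative (\<lambda>s. s *\<^sub>R v)) (at 0)"
    by (auto intro!: derivative_eq_intros)
  from diff_chain_at[OF this] assms
  have "((f \<circ> (\<lambda>s::real. z + s *\<^sub>R v)) has_derivative (f' \<circ> (\<lambda>s. s *\<^sub>R v))) (at 0)"
    by simp
  moreover have "f' \<circ> (\<lambda>s. s *\<^sub>R v) = (\<lambda>s. s *\<^sub>R f' v)"
    using linear_scale[OF has_derivative_linear[OF assms]] by (auto simp: fun_eq_iff)
  ultimately show ?thesis by (simp add: comp_def)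
qed

lemma open_line_preimage:
  fixes S :: "'a::real_normed_vector set"
  assumes "open S"
  shows "open {s::real. z + s *\<^sub>R v \<in> S}"
proof -
  have "open ((\<lambda>s::real. z + s *\<^sub>R v) -` S)"
    by (rule continuous_open_vimage[OF assms]) (auto intro!: continuous_intros)
  then show ?thesis
    by (simp add: vimage_def)
qed

lemma has_derivative_zero_if_locally_finite_valued:
  fixes h :: "'a::real_normed_vector \<Rightarrow> 'b::real_normed_vector"
  assumes cont: "continuous (at t) h" and F: "finite F" and ev: "\<forall>\<^sub>F s in nhds t. h s \<in> F"
  shows "(h has_derivative (\<lambda>_. 0)) (at t)"
proof -
  obtain e where e: "e > 0" "\<And>y. y \<in> F \<Longrightarrow> y \<noteq> h t \<Longrightarrow> e \<le> dist (h t) y"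
    using finite_set_avoid[OF F, of "h t"] by blast
  from cont e(1) obtain d1 where d1: "d1 > 0" "\<And>s. dist s t < d1 \<Longrightarrow> dist (h s) (h t) < e"
    unfolding continuous_at_eps_delta by blast
  from ev obtain d2 where d2: "d2 > 0" "\<And>s. dist s t < d2 \<Longrightarrow> h s \<in> F"
    unfolding eventually_nhds_metric by blast
  have d: "0 < min d1 d2"
    using d1(1) d2(1) by simp
  have "h t = h s" if "dist s t < min d1 d2" for s
  proof (rule ccontr)
    assume "h t \<noteq> h s"
    then have "e \<le> dist (h t) (h s)"
      using e(2)[of "h s"] d2(2)[of s] that by simp
    with d1(2)[of s] that show False
      by (simp add: dist_commute)
  qed
  then show ?thesis
    using has_derivative_transform_within[OF has_derivative_const[of "h t"] d, where s=UNIV and g=h]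
    by simp
qed

lemma has_derivative_unique_on_open:
  assumes "open S" "z \<in> S" "(f has_derivative f') (at z)" "(g has_derivative g') (at z)"
    and "\<And>z'. z' \<in> S \<Longrightarrow> f z' = g z'"
  shows "f' = g'"
proof -
  have "(g has_derivative f') (at z)"
    using has_derivative_transform_within_open assms by blast
  then show ?thesis
    using assms(4) by (rule has_derivative_unique)
qed

lemma has_derivative_matrix_identity:
  fixes F G H :: "'b::real_normed_vector \<Rightarrow> 'a::real_normed_field^'n::finite^'n"
  assumes "open S" "z \<in> S"
    and F: "\<And>a b. ((\<lambda>z. F z $ a $ b) has_derivative (\<lambda>h. F' h $ a $ b)) (at z)"
    and G: "\<And>a b. ((\<lambda>z. G z $ a $ b) has_derivative (\<lambda>h. G' h $ a $ b)) (at z)"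
    and H: "\<And>a b. ((\<lambda>z. H z $ a $ b) has_derivative (\<lambda>h. H' h $ a $ b)) (at z)"
    and c: "(c has_derivative c') (at z)"
    and eq: "\<And>z'. z' \<in> S \<Longrightarrow> F z' ** G z' = scale_mat (c z') (H z')"
  shows "F' h ** G z + F z ** G' h = scale_mat (c' h) (H z) + scale_mat (c z) (H' h)"
proof -
  have "(F' h ** G z + F z ** G' h) $ a $ b
      = (scale_mat (c' h) (H z) + scale_mat (c z) (H' h)) $ a $ b"
    for a b
  proof -
    have lhs: "((\<lambda>z. \<Sum>k\<in>UNIV. F z $ a $ k * G z $ k $ b) has_derivative
        (\<lambda>h. \<Sum>k\<in>UNIV. F z $ a $ k * G' h $ k $ b + F' h $ a $ k * G z $ k $ b)) (at z)"
      by (intro has_derivative_sum has_derivative_mult F G)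
    have rhs: "((\<lambda>z. c z * H z $ a $ b) has_derivative
        (\<lambda>h. c z * H' h $ a $ b + c' h * H z $ a $ b)) (at z)"
      by (intro has_derivative_mult c H)
    have "(\<lambda>h. \<Sum>k\<in>UNIV. F z $ a $ k * G' h $ k $ b + F' h $ a $ k * G z $ k $ b)
        = (\<lambda>h. c z * H' h $ a $ b + c' h * H z $ a $ b)"
      using has_derivative_unique_on_open[OF assms(1,2) lhs rhs]
        arg_cong[OF eq, of _ "\<lambda>M. M $ a $ b"]
      by (simp add: matrix_matrix_mult_def)
    from fun_cong[OF this, of h] show ?thesis
      by (simp add: matrix_matrix_mult_def sum.distrib add_ac)
  qed
  then show ?thesis by (simp add: vec_eq_iff)
qed

section \<open>The bracket in matrix form\<close>

text \<open>The A-gradient is stored transposed, so that on A-directions the differential of F is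
  H \<mapsto> trace (grad_A F z ** H).\<close>
definition grad_A :: "('d::finite pt \<Rightarrow> complex) \<Rightarrow> 'd pt \<Rightarrow> complex^'d^'d" where
  "grad_A F z = (\<chi> b a. frechet_derivative F (at z) (Edir a b))"

definition grad_q :: "('d::finite pt \<Rightarrow> complex) \<Rightarrow> 'd pt \<Rightarrow> complex^'d" where
  "grad_q F z = (\<chi> c. frechet_derivative F (at z) (Qdir c))"

lemma sum4_contract_middle:
  fixes f g :: "'d::finite \<Rightarrow> 'd \<Rightarrow> 'a::comm_ring_1" and A :: "'a^'d^'d"
  shows "(\<Sum>i\<in>UNIV. \<Sum>j\<in>UNIV. \<Sum>k\<in>UNIV. \<Sum>l\<in>UNIV. f i j * g k l * (if j = k then A$i$l else 0))
       = (\<Sum>k\<in>UNIV. \<Sum>l\<in>UNIV. (\<Sum>m\<in>UNIV. f m k * A$m$l) * g k l)"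
proof -
  have "(\<Sum>i\<in>UNIV. \<Sum>j\<in>UNIV. \<Sum>k\<in>UNIV. \<Sum>l\<in>UNIV. f i j * g k l * (if j = k then A$i$l else 0))
      = (\<Sum>i\<in>UNIV. \<Sum>j\<in>UNIV. \<Sum>l\<in>UNIV. f i j * g j l * A$i$l)"
  proof (rule sum.cong[OF refl], rule sum.cong[OF refl])
    fix i j
    have "(\<Sum>k\<in>UNIV. \<Sum>l\<in>UNIV. f i j * g k l * (if j = k then A$i$l else 0))
        = (\<Sum>k\<in>UNIV. if j = k then (\<Sum>l\<in>UNIV. f i j * g k l * A$i$l) else 0)"
      by (rule sum.cong) auto
    then show "(\<Sum>k\<in>UNIV. \<Sum>l\<in>UNIV. f i j * g k l * (if j = k then A$i$l else 0))
        = (\<Sum>l\<in>UNIV. f i j * g j l * A$i$l)"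
      by simp
  qed
  also have "\<dots> = (\<Sum>j\<in>UNIV. \<Sum>l\<in>UNIV. \<Sum>i\<in>UNIV. f i j * g j l * A$i$l)"
    by (subst sum.swap) (rule sum.cong[OF refl], rule sum.swap)
  also have "\<dots> = (\<Sum>k\<in>UNIV. \<Sum>l\<in>UNIV. (\<Sum>m\<in>UNIV. f m k * A$m$l) * g k l)"
    by (simp add: sum_distrib_left sum_distrib_right mult_ac)
  finally show ?thesis .
qed

lemma sum4_contract_outer:
  fixes f g :: "'d::finite \<Rightarrow> 'd \<Rightarrow> 'a::comm_ring_1" and A :: "'a^'d^'d"
  shows "(\<Sum>i\<in>UNIV. \<Sum>j\<in>UNIV. \<Sum>k\<in>UNIV. \<Sum>l\<in>UNIV. f i j * g k l * (if l = i then A$k$j else 0))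
       = (\<Sum>k\<in>UNIV. \<Sum>l\<in>UNIV. (\<Sum>m\<in>UNIV. A$k$m * f l m) * g k l)"
proof -
  have "(\<Sum>i\<in>UNIV. \<Sum>j\<in>UNIV. \<Sum>k\<in>UNIV. \<Sum>l\<in>UNIV. f i j * g k l * (if l = i then A$k$j else 0))
      = (\<Sum>i\<in>UNIV. \<Sum>j\<in>UNIV. \<Sum>k\<in>UNIV. f i j * g k i * A$k$j)"
  proof (rule sum.cong[OF refl], rule sum.cong[OF refl], rule sum.cong[OF refl])
    fix i j k
    have "(\<Sum>l\<in>UNIV. f i j * g k l * (if l = i then A$k$j else 0))
        = (\<Sum>l\<in>UNIV. if l = i then f i j * g k l * A$k$j else 0)"
      by (rule sum.cong) auto
    then show "(\<Sum>l\<in>UNIV. f i j * g k l * (if l = i then A$k$j else 0)) = f i j * g k i * A$k$j"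
      by simp
  qed
  also have "\<dots> = (\<Sum>k\<in>UNIV. \<Sum>i\<in>UNIV. \<Sum>j\<in>UNIV. f i j * g k i * A$k$j)"
    by (subst sum.swap) (rule sum.cong[OF refl], rule sum.swap)
  also have "\<dots> = (\<Sum>k\<in>UNIV. \<Sum>l\<in>UNIV. (\<Sum>m\<in>UNIV. A$k$m * f l m) * g k l)"
    by (simp add: sum_distrib_left sum_distrib_right mult_ac)
  finally show ?thesis .
qed

lemma pbracket_trace_form:
  "pbracket F G z = trace ((grad_A F z ** Amat z - Amat z ** grad_A F z) ** grad_A G z)
     + trace (outer (qvec z) (grad_q G z) ** grad_A F z)
     - trace (outer (qvec z) (grad_q F z) ** grad_A G z)"
proof -
  define f where "f i j = frechet_derivative F (at z) (Edir i j)" for i j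
  define g where "g i j = frechet_derivative G (at z) (Edir i j)" for i j
  define fq where "fq j = frechet_derivative F (at z) (Qdir j)" for j
  define gq where "gq j = frechet_derivative G (at z) (Qdir j)" for j
  let ?A = "Amat z" and ?q = "qvec z"
  have "pbracket F G z =
      (\<Sum>i\<in>UNIV. \<Sum>j\<in>UNIV. \<Sum>k\<in>UNIV. \<Sum>l\<in>UNIV. f i j * g k l * (if j = k then ?A$i$l else 0))
    - (\<Sum>i\<in>UNIV. \<Sum>j\<in>UNIV. \<Sum>k\<in>UNIV. \<Sum>l\<in>UNIV. f i j * g k l * (if l = i then ?A$k$j else 0))
    + ((\<Sum>i\<in>UNIV. \<Sum>j\<in>UNIV. f i j * gq j * ?q$i) - (\<Sum>i\<in>UNIV. \<Sum>j\<in>UNIV. g i j * fq j * ?q$i))"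
    by (simp add: pbracket_def Let_def f_def g_def fq_def gq_def right_diff_distrib
        left_diff_distrib sum_subtractf)
  also have "\<dots> = trace ((grad_A F z ** ?A - ?A ** grad_A F z) ** grad_A G z)
     + trace (outer ?q (grad_q G z) ** grad_A F z) - trace (outer ?q (grad_q F z) ** grad_A G z)"
    unfolding sum4_contract_middle sum4_contract_outer
    by (simp add: trace_def matrix_matrix_mult_def grad_A_def grad_q_def outer_def f_def g_def
        fq_def gq_def left_diff_distrib right_diff_distrib sum_subtractf mult_ac)
  finally show ?thesis .
qed

lemma pbracket_self: "pbracket F F z = 0"
proof -
  have "trace ((Amat z ** grad_A F z) ** grad_A F z) = trace (grad_A F z ** (Amat z ** grad_A F z))"
    by (rule trace_mul_sym)
  then show ?thesis
    by (simp add: pbracket_trace_form matrix_diff_rdistrib trace_sub matrix_mul_assoc)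
qed

lemma pbracket_commuting_grad:
  assumes "grad_A F z ** Amat z = Amat z ** grad_A F z" and "grad_q F z = 0"
  shows "pbracket F G z = bilin (grad_q G z) (grad_A F z) (qvec z)"
proof -
  have "outer (qvec z) 0 = (0 :: complex^'a^'a)"
    by (simp add: outer_def vec_eq_iff)
  then show ?thesis
    using assms by (simp add: pbracket_trace_form trace_outer_mult)
qed

section \<open>Eigenvalues and their spectral projections\<close>

lemma Amat_add_scaleR: "Amat (z + s *\<^sub>R v) = Amat z + s *\<^sub>R Amat v"
  by (simp add: Amat_def)

lemma Amat_Edir: "Amat (Edir a b) = unit_mat a b"
  by (simp add: Amat_def Edir_def unit_mat_def)

lemma Amat_Qdir: "Amat (Qdir c) = 0"
  by (simp add: Amat_def Qdir_def)

lemma qvec_Edir: "qvec (Edir a b) = 0" and pvec_Edir: "pvec (Edir a b) = 0"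
  and qvec_Qdir: "qvec (Qdir c) = axis c 1" and pvec_Qdir: "pvec (Qdir c) = 0"
  by (simp_all add: qvec_def pvec_def Edir_def Qdir_def)

lemma has_derivative_Amat_nth:
  "((\<lambda>z::'d::finite pt. Amat z $ a $ b) has_derivative (\<lambda>h. Amat h $ a $ b)) F"
  unfolding Amat_def
  by (intro bounded_linear_imp_has_derivative bounded_linear_compose[OF bounded_linear_vec_nth]
      bounded_linear_compose[OF bounded_linear_vec_nth] bounded_linear_fst)

lemma has_derivative_qvec_nth:
  "((\<lambda>z::'d::finite pt. qvec z $ a) has_derivative (\<lambda>h. qvec h $ a)) F"
  unfolding qvec_def
  by (intro bounded_linear_imp_has_derivative bounded_linear_compose[OF bounded_linear_vec_nth]
      bounded_linear_compose[OF bounded_linear_fst] bounded_linear_snd)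

lemma has_derivative_pvec_nth:
  "((\<lambda>z::'d::finite pt. pvec z $ a) has_derivative (\<lambda>h. pvec h $ a)) F"
  unfolding pvec_def
  by (intro bounded_linear_imp_has_derivative bounded_linear_compose[OF bounded_linear_vec_nth]
      bounded_linear_compose[OF bounded_linear_snd] bounded_linear_snd)

lemma differentiable_mpow_Amat_nth:
  "(\<lambda>z::'d::finite pt. mpow (Amat z) n $ a $ b) differentiable (at z)"
proof (induct n arbitrary: a b)
  case 0
  then show ?case by (simp add: mat_def)
next
  case (Suc n)
  have "(\<lambda>z::'d pt. Amat z $ a $ c) differentiable (at z)" for c
    using has_derivative_Amat_nth by (auto simp: differentiable_def)
  with Suc show ?case
    by (simp add: matrix_matrix_mult_def)
qed

locale distinct_eigenvalues =
  fixes S :: "'d::finite pt set" and x :: "'d \<Rightarrow> 'd pt \<Rightarrow> complex"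
  assumes open_S: "open S"
    and differentiable_x: "\<And>i. x i differentiable_on S"
    and x_distinct: "\<And>z i j. z \<in> S \<Longrightarrow> i \<noteq> j \<Longrightarrow> x i z \<noteq> x j z"
    and det_eq_prod_x: "\<And>z t. z \<in> S \<Longrightarrow> det (mat t - Amat z) = (\<Prod>i\<in>UNIV. t - x i z)"
begin

definition dx :: "'d \<Rightarrow> 'd pt \<Rightarrow> 'd pt \<Rightarrow> complex" where
  "dx i z = frechet_derivative (x i) (at z)"

lemma has_derivative_x: "z \<in> S \<Longrightarrow> (x i has_derivative dx i z) (at z)"
  using differentiable_x[of i] open_S
  by (simp add: dx_def differentiable_on_eq_differentiable_at frechet_derivative_works)

text \<open>The spectrum does not depend on q, and the eigenvalues are continuous and pairwise
  distinct, so each of them is locally constant in the q-directions.\<close>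
lemma dx_Qdir:
  assumes z: "z \<in> S"
  shows "dx i z (Qdir c) = 0"
proof -
  let ?h = "\<lambda>s::real. x i (z + s *\<^sub>R Qdir c)"
  have line: "(?h has_derivative (\<lambda>s. s *\<^sub>R dx i z (Qdir c))) (at 0)"
    by (rule has_derivative_along_line[OF has_derivative_x[OF z]])
  have root: "?h s \<in> range (\<lambda>m. x m z)" if "z + s *\<^sub>R Qdir c \<in> S" for s
  proof -
    have "(\<Prod>m\<in>UNIV. ?h s - x m z) = (\<Prod>m\<in>UNIV. ?h s - x m (z + s *\<^sub>R Qdir c))"
      using det_eq_prod_x[OF z, of "?h s"] det_eq_prod_x[OF that, of "?h s"]
      by (simp add: Amat_add_scaleR Amat_Qdir)
    also have "\<dots> = 0"
      by (rule prod_zero) auto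
    finally show ?thesis
      by (auto simp: prod_zero_iff)
  qed
  have "\<forall>\<^sub>F s in nhds 0. z + s *\<^sub>R Qdir c \<in> S"
    using eventually_nhds_in_open[OF open_line_preimage[OF open_S, of z "Qdir c"]] z by simp
  then have ev: "\<forall>\<^sub>F s in nhds 0. ?h s \<in> range (\<lambda>m. x m z)"
    by (rule eventually_mono) (rule root)
  have "(?h has_derivative (\<lambda>_. 0)) (at 0)"
    using has_derivative_zero_if_locally_finite_valued[OF has_derivative_continuous[OF line] _ ev]
    by simp
  from fun_cong[OF has_derivative_unique[OF line this], of 1] show ?thesis
    by simp
qed

text \<open>Perturbing A by s E_ab changes det (t - A) linearly in s; comparing with the derivative of
  the product over the eigenvalues at s = 0 gives the A-derivatives of the eigenvalues.\<close>
lemma det_replace_row_eq_sum_dx: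
  assumes z: "z \<in> S"
  shows "det (replace_row (mat t - Amat z) a (axis b 1)) =
         (\<Sum>i\<in>UNIV. dx i z (Edir a b) * (\<Prod>j\<in>UNIV - {i}. t - x j z))"
proof -
  let ?v = "Edir a b :: 'd pt"
  let ?R = "det (replace_row (mat t - Amat z) a (axis b 1))"
  let ?f = "\<lambda>s::real. det (mat t - Amat z) - s *\<^sub>R ?R"
  let ?g = "\<lambda>s::real. \<Prod>m\<in>UNIV. t - x m (z + s *\<^sub>R ?v)"
  have f: "(?f has_derivative (\<lambda>s. - (s *\<^sub>R ?R))) (at 0)"
    by (auto intro!: derivative_eq_intros)
  have g: "(?g has_derivative (\<lambda>s. \<Sum>m\<in>UNIV. (0 - s *\<^sub>R dx m z ?v) *
                (\<Prod>j\<in>UNIV - {m}. t - x j (z + 0 *\<^sub>R ?v)))) (at 0)"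
    by (intro has_derivative_prod has_derivative_diff has_derivative_const
        has_derivative_along_line has_derivative_x z)
  have fg: "?f s = ?g s" if "z + s *\<^sub>R ?v \<in> S" for s
  proof -
    have "s *\<^sub>R unit_mat a b = scale_mat (of_real s) (unit_mat a b :: complex^'d^'d)"
      unfolding vec_eq_iff by (simp add: unit_mat_def complex_eq_iff)
    then have A: "mat t - Amat (z + s *\<^sub>R ?v)
        = (mat t - Amat z) - scale_mat (of_real s) (unit_mat a b)"
      by (simp add: Amat_add_scaleR Amat_Edir)
    have "?g s = det (mat t - Amat (z + s *\<^sub>R ?v))"
      using det_eq_prod_x[OF that] by simp
    also have "\<dots> = ?f s"
      unfolding A by (simp add: det_sub_scale_unit_mat scaleR_conv_of_real)
    finally show ?thesis ..
  qed
  have "(?g has_derivative (\<lambda>s. - (s *\<^sub>R ?R))) (at 0)"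
    by (rule has_derivative_transform_within_open[OF f open_line_preimage[OF open_S, of z ?v]])
      (use z fg in auto)
  from fun_cong[OF has_derivative_unique[OF g this], of 1] show ?thesis
    by (simp add: sum_negf)
qed

definition eigenproj :: "'d \<Rightarrow> 'd pt \<Rightarrow> complex^'d^'d" where
  "eigenproj i z = grad_A (x i) z"

lemma eigenproj_nth: "eigenproj i z $ b $ a = dx i z (Edir a b)"
  by (simp add: eigenproj_def grad_A_def dx_def)

definition lagrange_denom :: "'d \<Rightarrow> 'd pt \<Rightarrow> complex" where
  "lagrange_denom j z = (\<Prod>k\<in>UNIV-{j}. x j z - x k z)"

lemma lagrange_denom_nonzero: "z \<in> S \<Longrightarrow> lagrange_denom j z \<noteq> 0"
  unfolding lagrange_denom_def using x_distinct by auto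

text \<open>The eigenprojections, weighted by the Lagrange products, assemble the adjugate of t - A.\<close>
lemma sum_mult_eigenproj_prod:
  assumes z: "z \<in> S"
  shows "(\<Sum>i\<in>UNIV. ((mat t - Amat z) ** eigenproj i z)$c$a * (\<Prod>j\<in>UNIV-{i}. t - x j z))
       = (if c = a then (\<Prod>j\<in>UNIV. t - x j z) else 0)"
proof -
  let ?M = "mat t - Amat z"
  have "(\<Sum>i\<in>UNIV. (?M ** eigenproj i z)$c$a * (\<Prod>j\<in>UNIV-{i}. t - x j z))
      = (\<Sum>i\<in>UNIV. \<Sum>b\<in>UNIV. ?M$c$b * (dx i z (Edir a b) * (\<Prod>j\<in>UNIV-{i}. t - x j z)))"
    by (simp add: matrix_matrix_mult_def eigenproj_nth sum_distrib_right sum_distrib_left mult_ac)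
  also have "\<dots> = (\<Sum>b\<in>UNIV. ?M$c$b * det (replace_row ?M a (axis b 1)))"
    by (subst sum.swap) (simp add: det_replace_row_eq_sum_dx[OF z] sum_distrib_left)
  also have "\<dots> = (if c = a then det ?M else 0)"
    by (rule sum_mult_det_replace_row)
  finally show ?thesis
    using det_eq_prod_x[OF z] by simp
qed

lemma Amat_mult_eigenproj:
  assumes z: "z \<in> S"
  shows "Amat z ** eigenproj k z = scale_mat (x k z) (eigenproj k z)"
proof -
  have "((mat (x k z) - Amat z) ** eigenproj k z)$c$a = 0" for c a
  proof -
    let ?t = "x k z"
    have sum: "(\<Sum>i\<in>UNIV. ((mat ?t - Amat z) ** eigenproj i z)$c$a * (\<Prod>j\<in>UNIV-{i}. ?t - x j z))
        = ((mat ?t - Amat z) ** eigenproj k z)$c$a * lagrange_denom k z"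
      unfolding lagrange_denom_def by (rule sum_UNIV_eq_single) (auto intro!: prod_zero)
    have prod: "(if c = a then (\<Prod>j\<in>UNIV. ?t - x j z) else 0) = 0"
      by (auto intro!: prod_zero)
    have "((mat ?t - Amat z) ** eigenproj k z)$c$a * lagrange_denom k z = 0"
      using sum_mult_eigenproj_prod[OF z, of ?t c a] unfolding sum prod .
    then show ?thesis
      using lagrange_denom_nonzero[OF z, of k] by simp
  qed
  then show ?thesis
    by (simp add: vec_eq_iff mat_diff_mult_nth)
qed

lemma sum_eigenproj:
  assumes z: "z \<in> S"
  shows "(\<Sum>k\<in>UNIV. eigenproj k z) = mat 1"
proof -
  have "finite (range (\<lambda>j. x j z))"
    by simp
  from ex_new_if_finite[OF infinite_UNIV_char_0[where 'a=complex] this]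
  obtain t where t: "t \<notin> range (\<lambda>j. x j z)"
    by blast
  then have P: "(\<Prod>j\<in>UNIV. t - x j z) \<noteq> 0"
    by auto
  have "(\<Sum>k\<in>UNIV. eigenproj k z $ c $ a) = mat 1 $ c $ a" for c a
  proof -
    have "((mat t - Amat z) ** eigenproj i z)$c$a * (\<Prod>j\<in>UNIV-{i}. t - x j z)
        = eigenproj i z $c$a * (\<Prod>j\<in>UNIV. t - x j z)" for i
    proof -
      have "((mat t - Amat z) ** eigenproj i z)$c$a = (t - x i z) * eigenproj i z $c$a"
        by (simp add: mat_diff_mult_nth Amat_mult_eigenproj[OF z] left_diff_distrib)
      then have "((mat t - Amat z) ** eigenproj i z)$c$a * (\<Prod>j\<in>UNIV-{i}. t - x j z)
          = eigenproj i z $c$a * ((t - x i z) * (\<Prod>j\<in>UNIV-{i}. t - x j z))"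
        by (simp add: mult_ac)
      also have "(t - x i z) * (\<Prod>j\<in>UNIV-{i}. t - x j z) = (\<Prod>j\<in>UNIV. t - x j z)"
        using prod.remove[of UNIV i "\<lambda>j. t - x j z"] by simp
      finally show ?thesis .
    qed
    then have "(\<Sum>k\<in>UNIV. eigenproj k z $ c $ a) * (\<Prod>j\<in>UNIV. t - x j z)
        = (if c = a then (\<Prod>j\<in>UNIV. t - x j z) else 0)"
      using sum_mult_eigenproj_prod[OF z, of t c a] by (simp add: sum_distrib_right)
    then show ?thesis
      using P by (cases "c = a") (simp_all add: mat_def)
  qed
  then show ?thesis
    by (simp add: vec_eq_iff)
qed

lemma mpow_mult_eigenproj:
  assumes z: "z \<in> S"
  shows "mpow (Amat z) n ** eigenproj k z = scale_mat (x k z ^ n) (eigenproj k z)"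
proof (induct n)
  case 0
  then show ?case by simp
next
  case (Suc n)
  have "mpow (Amat z) (Suc n) ** eigenproj k z = Amat z ** (mpow (Amat z) n ** eigenproj k z)"
    by (simp add: matrix_mul_assoc)
  also have "\<dots> = scale_mat (x k z ^ Suc n) (eigenproj k z)"
    by (simp add: Suc scale_mat_mult_right Amat_mult_eigenproj[OF z] mult.commute)
  finally show ?case .
qed

section \<open>The functions y_j\<close>

text \<open>y_j = p P_j(A) q for the Lagrange numerator P_j(t) = \<Prod>_{k \<noteq> j} (t - x_k), expanded by
  Vieta's formulas.\<close>
definition lagrange_coeff :: "'d \<Rightarrow> 'd pt \<Rightarrow> nat \<Rightarrow> complex" where
  "lagrange_coeff j z r = (-1)^r * esym r (UNIV - {j}) (\<lambda>k. x k z)"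

definition lagrange_mat :: "'d \<Rightarrow> 'd pt \<Rightarrow> complex^'d^'d" where
  "lagrange_mat j z =
     (\<Sum>r<CARD('d). scale_mat (lagrange_coeff j z r) (mpow (Amat z) (CARD('d) - 1 - r)))"

lemma y_fun_eq_bilin: "y_fun x j z = bilin (pvec z) (lagrange_mat j z) (qvec z)"
proof -
  have "y_fun x j z = (\<Sum>r<CARD('d). \<Sum>a\<in>UNIV. \<Sum>b\<in>UNIV.
          pvec z $ a * (lagrange_coeff j z r * mpow (Amat z) (CARD('d) - 1 - r) $ a $ b) * qvec z $ b)"
    unfolding y_fun_def b_fun_def lagrange_coeff_def by (simp add: sum_distrib_left mult_ac)
  also have "\<dots> = (\<Sum>a\<in>UNIV. \<Sum>b\<in>UNIV. \<Sum>r<CARD('d).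
          pvec z $ a * (lagrange_coeff j z r * mpow (Amat z) (CARD('d) - 1 - r) $ a $ b) * qvec z $ b)"
    by (subst sum.swap) (rule sum.cong[OF refl], rule sum.swap)
  also have "\<dots> = bilin (pvec z) (lagrange_mat j z) (qvec z)"
    unfolding lagrange_mat_def bilin_def by (simp add: sum_distrib_left sum_distrib_right)
  finally show ?thesis .
qed

lemma lagrange_mat_mult_eigenproj_scaled:
  assumes z: "z \<in> S"
  shows "lagrange_mat j z ** eigenproj k z
       = scale_mat (if k = j then lagrange_denom j z else 0) (eigenproj k z)"
proof -
  have "lagrange_mat j z ** eigenproj k z
      = (\<Sum>r<CARD('d). scale_mat (lagrange_coeff j z r * x k z ^ (CARD('d) - 1 - r)) (eigenproj k z))"
    unfolding lagrange_mat_def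
    by (simp add: matrix_mult_sum_left scale_mat_mult_left mpow_mult_eigenproj[OF z])
  also have "\<dots> = scale_mat (\<Prod>m\<in>UNIV-{j}. x k z - x m z) (eigenproj k z)"
    unfolding sum_scale_mat lagrange_coeff_def
    using prod_remove_diff_eq_sum_esym[where j=j and s="x k z" and f="\<lambda>m. x m z"] by simp
  also have "(\<Prod>m\<in>UNIV-{j}. x k z - x m z) = (if k = j then lagrange_denom j z else 0)"
    by (auto simp: lagrange_denom_def intro!: prod_zero)
  finally show ?thesis .
qed

lemma lagrange_mat_eq_scale_eigenproj:
  assumes z: "z \<in> S"
  shows "lagrange_mat j z = scale_mat (lagrange_denom j z) (eigenproj j z)"
proof -
  have "lagrange_mat j z = lagrange_mat j z ** (\<Sum>k\<in>UNIV. eigenproj k z)"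
    by (simp add: sum_eigenproj[OF z])
  also have "\<dots> = (\<Sum>k\<in>UNIV. scale_mat (if k = j then lagrange_denom j z else 0) (eigenproj k z))"
    by (simp add: matrix_mult_sum_right lagrange_mat_mult_eigenproj_scaled[OF z])
  also have "\<dots> = scale_mat (lagrange_denom j z) (eigenproj j z)"
    by (subst sum_UNIV_eq_single[where k=j]) auto
  finally show ?thesis .
qed

lemma eigenproj_mult_eigenproj:
  assumes z: "z \<in> S"
  shows "eigenproj j z ** eigenproj k z = (if k = j then eigenproj k z else 0)"
proof -
  have "scale_mat (lagrange_denom j z) (eigenproj j z ** eigenproj k z)
      = scale_mat (lagrange_denom j z) (if k = j then eigenproj k z else 0)"
    using lagrange_mat_mult_eigenproj_scaled[OF z, of j k]
    by (auto simp: lagrange_mat_eq_scale_eigenproj[OF z] scale_mat_mult_left)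
  then show ?thesis
    using lagrange_denom_nonzero[OF z] by (rule scale_mat_cancel)
qed

lemma Amat_eq_sum_eigenproj:
  assumes z: "z \<in> S"
  shows "Amat z = (\<Sum>k\<in>UNIV. scale_mat (x k z) (eigenproj k z))"
proof -
  have "Amat z = Amat z ** (\<Sum>k\<in>UNIV. eigenproj k z)"
    by (simp add: sum_eigenproj[OF z])
  also have "\<dots> = (\<Sum>k\<in>UNIV. scale_mat (x k z) (eigenproj k z))"
    by (simp add: matrix_mult_sum_right Amat_mult_eigenproj[OF z])
  finally show ?thesis .
qed

lemma eigenproj_mult_Amat:
  assumes z: "z \<in> S"
  shows "eigenproj j z ** Amat z = scale_mat (x j z) (eigenproj j z)"
proof -
  have "eigenproj j z ** Amat z = (\<Sum>k\<in>UNIV. scale_mat (x k z) (eigenproj j z ** eigenproj k z))"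
    by (subst Amat_eq_sum_eigenproj[OF z]) (simp add: matrix_mult_sum_right scale_mat_mult_right)
  also have "\<dots> = scale_mat (x j z) (eigenproj j z)"
    by (subst sum_UNIV_eq_single[where k=j]) (auto simp: eigenproj_mult_eigenproj[OF z])
  finally show ?thesis .
qed

lemma Amat_mult_lagrange_mat:
  "z \<in> S \<Longrightarrow> Amat z ** lagrange_mat j z = scale_mat (x j z) (lagrange_mat j z)"
  by (simp add: lagrange_mat_eq_scale_eigenproj scale_mat_mult_right Amat_mult_eigenproj
      mult.commute)

lemma lagrange_mat_mult_Amat:
  "z \<in> S \<Longrightarrow> lagrange_mat j z ** Amat z = scale_mat (x j z) (lagrange_mat j z)"
  by (simp add: lagrange_mat_eq_scale_eigenproj scale_mat_mult_left eigenproj_mult_Amat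
      mult.commute)

lemma lagrange_mat_mult_self:
  "z \<in> S \<Longrightarrow>
    lagrange_mat j z ** lagrange_mat j z = scale_mat (lagrange_denom j z) (lagrange_mat j z)"
  by (simp add: lagrange_mat_eq_scale_eigenproj scale_mat_mult_left scale_mat_mult_right
      eigenproj_mult_eigenproj)

lemma eigenproj_mult_lagrange_mat:
  "z \<in> S \<Longrightarrow> eigenproj k z ** lagrange_mat j z = (if k = j then lagrange_mat j z else 0)"
  by (simp add: lagrange_mat_eq_scale_eigenproj scale_mat_mult_right eigenproj_mult_eigenproj)

lemma lagrange_mat_mult_eigenproj:
  "z \<in> S \<Longrightarrow> lagrange_mat j z ** eigenproj k z = (if k = j then lagrange_mat j z else 0)"
  by (simp add: lagrange_mat_eq_scale_eigenproj scale_mat_mult_left eigenproj_mult_eigenproj)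

lemma lagrange_mat_mult_lagrange_mat:
  "z \<in> S \<Longrightarrow> i \<noteq> j \<Longrightarrow> lagrange_mat j z ** lagrange_mat i z = 0"
  by (simp add: lagrange_mat_eq_scale_eigenproj scale_mat_mult_left scale_mat_mult_right
      eigenproj_mult_eigenproj)

lemma differentiable_lagrange_mat_nth:
  assumes z: "z \<in> S"
  shows "(\<lambda>z. lagrange_mat j z $ a $ b) differentiable (at z)"
proof -
  have "(\<lambda>z. esym r K (\<lambda>k. x k z)) differentiable (at z)" for r and K :: "'d set"
    unfolding esym_def using has_derivative_x[OF z]
    by (intro differentiable_sum ballI differentiable_prod) (auto simp: differentiable_def)
  then show ?thesis
    unfolding lagrange_mat_def lagrange_coeff_def
    by (simp add: differentiable_mpow_Amat_nth)
qed

definition dlagrange :: "'d \<Rightarrow> 'd pt \<Rightarrow> 'd pt \<Rightarrow> complex^'d^'d" where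
  "dlagrange j z h = (\<chi> a b. frechet_derivative (\<lambda>z. lagrange_mat j z $ a $ b) (at z) h)"

lemma has_derivative_lagrange_mat_nth:
  "z \<in> S \<Longrightarrow>
    ((\<lambda>z. lagrange_mat j z $ a $ b) has_derivative (\<lambda>h. dlagrange j z h $ a $ b)) (at z)"
  unfolding dlagrange_def using differentiable_lagrange_mat_nth frechet_derivative_works
  by fastforce

definition lagrange_denom_except :: "'d \<Rightarrow> 'd \<Rightarrow> 'd pt \<Rightarrow> complex" where
  "lagrange_denom_except j k z = (\<Prod>m\<in>UNIV-{j}-{k}. x j z - x m z)"

definition dlagrange_denom :: "'d \<Rightarrow> 'd pt \<Rightarrow> 'd pt \<Rightarrow> complex" where
  "dlagrange_denom j z h = (\<Sum>k\<in>UNIV-{j}. (dx j z h - dx k z h) * lagrange_denom_except j k z)"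

lemma has_derivative_lagrange_denom:
  "z \<in> S \<Longrightarrow> (lagrange_denom j has_derivative dlagrange_denom j z) (at z)"
  unfolding lagrange_denom_def[abs_def] dlagrange_denom_def[abs_def] lagrange_denom_except_def
  by (intro has_derivative_prod has_derivative_diff has_derivative_x)

lemma lagrange_denom_eq_mult_except:
  "i \<noteq> j \<Longrightarrow> lagrange_denom i z = (x i z - x j z) * lagrange_denom_except i j z"
  unfolding lagrange_denom_def lagrange_denom_except_def by (subst prod.remove[of "UNIV-{i}" j]) auto

lemma dlagrange_left:
  assumes z: "z \<in> S"
  shows "Amat h ** lagrange_mat j z + Amat z ** dlagrange j z h
       = scale_mat (dx j z h) (lagrange_mat j z) + scale_mat (x j z) (dlagrange j z h)"
  by (rule has_derivative_matrix_identity[OF open_S z has_derivative_Amat_nth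
        has_derivative_lagrange_mat_nth[OF z] has_derivative_lagrange_mat_nth[OF z]
        has_derivative_x[OF z] Amat_mult_lagrange_mat])

lemma dlagrange_right:
  assumes z: "z \<in> S"
  shows "dlagrange j z h ** Amat z + lagrange_mat j z ** Amat h
       = scale_mat (dx j z h) (lagrange_mat j z) + scale_mat (x j z) (dlagrange j z h)"
  by (rule has_derivative_matrix_identity[OF open_S z has_derivative_lagrange_mat_nth[OF z]
        has_derivative_Amat_nth has_derivative_lagrange_mat_nth[OF z]
        has_derivative_x[OF z] lagrange_mat_mult_Amat])

lemma dlagrange_square:
  assumes z: "z \<in> S"
  shows "dlagrange j z h ** lagrange_mat j z + lagrange_mat j z ** dlagrange j z h
       = scale_mat (dlagrange_denom j z h) (lagrange_mat j z)
         + scale_mat (lagrange_denom j z) (dlagrange j z h)"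
  by (rule has_derivative_matrix_identity[OF open_S z has_derivative_lagrange_mat_nth[OF z]
        has_derivative_lagrange_mat_nth[OF z] has_derivative_lagrange_mat_nth[OF z]
        has_derivative_lagrange_denom[OF z] lagrange_mat_mult_self])

lemma eigenproj_mult_dlagrange:
  assumes z: "z \<in> S" and kj: "k \<noteq> j"
  shows "eigenproj k z ** dlagrange j z h
       = scale_mat (1 / (x j z - x k z)) (eigenproj k z ** Amat h ** lagrange_mat j z)"
proof -
  let ?N = "eigenproj k z" and ?D = "dlagrange j z h"
  have "?N ** (Amat h ** lagrange_mat j z + Amat z ** ?D)
      = ?N ** (scale_mat (dx j z h) (lagrange_mat j z) + scale_mat (x j z) ?D)"
    using dlagrange_left[OF z, of h j] by simp
  then have "?N ** Amat h ** lagrange_mat j z + scale_mat (x k z) (?N ** ?D)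
      = scale_mat (x j z) (?N ** ?D)"
    using kj by (simp add: matrix_add_ldistrib scale_mat_mult_right matrix_mul_assoc
        eigenproj_mult_Amat[OF z] scale_mat_mult_left eigenproj_mult_lagrange_mat[OF z])
  then have "?N ** Amat h ** lagrange_mat j z = scale_mat (x j z - x k z) (?N ** ?D)"
    by (simp add: vec_eq_iff algebra_simps)
  moreover have "x j z - x k z \<noteq> 0"
    using x_distinct[OF z] kj by simp
  ultimately show ?thesis
    by (simp add: vec_eq_iff)
qed

lemma dlagrange_mult_eigenproj:
  assumes z: "z \<in> S" and lj: "l \<noteq> j"
  shows "dlagrange j z h ** eigenproj l z
       = scale_mat (1 / (x j z - x l z)) (lagrange_mat j z ** Amat h ** eigenproj l z)"
proof -
  let ?N = "eigenproj l z" and ?D = "dlagrange j z h"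
  have "(?D ** Amat z + lagrange_mat j z ** Amat h) ** ?N
      = (scale_mat (dx j z h) (lagrange_mat j z) + scale_mat (x j z) ?D) ** ?N"
    using dlagrange_right[OF z, of j h] by simp
  then have "lagrange_mat j z ** Amat h ** ?N + scale_mat (x l z) (?D ** ?N)
      = scale_mat (x j z) (?D ** ?N)"
    using lj by (simp add: matrix_add_rdistrib scale_mat_mult_right scale_mat_mult_left
        matrix_mul_assoc[symmetric] Amat_mult_eigenproj[OF z] lagrange_mat_mult_eigenproj[OF z]
        add_ac)
  then have "lagrange_mat j z ** Amat h ** ?N = scale_mat (x j z - x l z) (?D ** ?N)"
    by (simp add: vec_eq_iff algebra_simps)
  moreover have "x j z - x l z \<noteq> 0"
    using x_distinct[OF z] lj by simp
  ultimately show ?thesis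
    by (simp add: vec_eq_iff)
qed

lemma eigenproj_dlagrange_eigenproj:
  assumes z: "z \<in> S"
  shows "eigenproj j z ** dlagrange j z h ** eigenproj j z
       = scale_mat (dlagrange_denom j z h) (eigenproj j z)"
proof -
  let ?D = "dlagrange j z h" and ?dc = "dlagrange_denom j z h"
  let ?c = "lagrange_denom j z" and ?N = "eigenproj j z" and ?P = "lagrange_mat j z"
  have PN: "?P ** ?N = scale_mat ?c ?N" and NP: "?N ** ?P = scale_mat ?c ?N"
    using lagrange_mat_mult_eigenproj[OF z, of j j] eigenproj_mult_lagrange_mat[OF z, of j j]
      lagrange_mat_eq_scale_eigenproj[OF z] by simp_all
  have "?N ** (?D ** ?P + ?P ** ?D) ** ?N = ?N ** (scale_mat ?dc ?P + scale_mat ?c ?D) ** ?N"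
    using dlagrange_square[OF z, of j h] by simp
  moreover have "?N ** (?D ** ?P) ** ?N = scale_mat ?c (?N ** ?D ** ?N)"
    by (simp add: matrix_mul_assoc[symmetric] PN scale_mat_mult_right)
  moreover have "?N ** (?P ** ?D) ** ?N = scale_mat ?c (?N ** ?D ** ?N)"
    by (simp add: matrix_mul_assoc NP scale_mat_mult_left)
  moreover have "?N ** scale_mat ?dc ?P ** ?N = scale_mat (?dc * ?c) ?N"
    by (simp add: scale_mat_mult_left scale_mat_mult_right NP eigenproj_mult_eigenproj[OF z])
  moreover have "?N ** scale_mat ?c ?D ** ?N = scale_mat ?c (?N ** ?D ** ?N)"
    by (simp add: scale_mat_mult_left scale_mat_mult_right)
  ultimately have "scale_mat ?c (?N ** ?D ** ?N) + scale_mat ?c (?N ** ?D ** ?N)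
      = scale_mat (?dc * ?c) ?N + scale_mat ?c (?N ** ?D ** ?N)"
    by (simp add: matrix_add_ldistrib matrix_add_rdistrib)
  then have "scale_mat ?c (?N ** ?D ** ?N) = scale_mat ?c (scale_mat ?dc ?N)"
    by (simp add: vec_eq_iff algebra_simps)
  then show ?thesis
    using lagrange_denom_nonzero[OF z] by (rule scale_mat_cancel)
qed

text \<open>Decomposing dP_j = (\<Sum>_k N_k) dP_j (\<Sum>_l N_l) into blocks: the off-diagonal blocks are
  determined by the first two identities of dlagrange, the diagonal one by the third.\<close>
lemma dlagrange_eq:
  assumes z: "z \<in> S"
  shows "dlagrange j z h
       = (\<Sum>k\<in>UNIV-{j}. scale_mat (1 / (x j z - x k z)) (eigenproj k z ** Amat h ** lagrange_mat j z))
       + (\<Sum>l\<in>UNIV-{j}. scale_mat (1 / (x j z - x l z)) (lagrange_mat j z ** Amat h ** eigenproj l z))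
       + scale_mat (dlagrange_denom j z h) (eigenproj j z)"
proof -
  let ?D = "dlagrange j z h" and ?N = "eigenproj j z"
  have NP: "?N ** lagrange_mat j z = lagrange_mat j z"
    using eigenproj_mult_lagrange_mat[OF z, of j j] by simp
  have split: "(\<Sum>k\<in>UNIV. f k) = f j + (\<Sum>k\<in>UNIV-{j}. f k)" for f :: "'d \<Rightarrow> complex^'d^'d"
    by (rule sum.remove) auto
  have "?D = (\<Sum>k\<in>UNIV. eigenproj k z) ** ?D"
    by (simp add: sum_eigenproj[OF z])
  also have "\<dots> = ?N ** ?D + (\<Sum>k\<in>UNIV-{j}. eigenproj k z ** ?D)"
    by (subst matrix_mult_sum_left, rule split)
  also have "(\<Sum>k\<in>UNIV-{j}. eigenproj k z ** ?D)
      = (\<Sum>k\<in>UNIV-{j}. scale_mat (1 / (x j z - x k z)) (eigenproj k z ** Amat h ** lagrange_mat j z))"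
    by (rule sum.cong[OF refl]) (simp add: eigenproj_mult_dlagrange[OF z])
  also have "?N ** ?D = ?N ** ?D ** (\<Sum>l\<in>UNIV. eigenproj l z)"
    by (simp add: sum_eigenproj[OF z])
  also have "\<dots> = ?N ** ?D ** ?N + (\<Sum>l\<in>UNIV-{j}. ?N ** (?D ** eigenproj l z))"
    by (subst matrix_mult_sum_right, subst split, simp only: matrix_mul_assoc)
  also have "(\<Sum>l\<in>UNIV-{j}. ?N ** (?D ** eigenproj l z))
      = (\<Sum>l\<in>UNIV-{j}. scale_mat (1 / (x j z - x l z)) (lagrange_mat j z ** Amat h ** eigenproj l z))"
    by (rule sum.cong[OF refl])
      (simp add: dlagrange_mult_eigenproj[OF z] scale_mat_mult_right matrix_mul_assoc NP)
  also have "?N ** ?D ** ?N = scale_mat (dlagrange_denom j z h) ?N"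
    by (rule eigenproj_dlagrange_eigenproj[OF z])
  finally show ?thesis
    by (simp add: add_ac)
qed

lemma dlagrange_Qdir: "z \<in> S \<Longrightarrow> dlagrange j z (Qdir c) = 0"
  by (simp add: dlagrange_eq Amat_Qdir dlagrange_denom_def dx_Qdir)

lemma has_derivative_y:
  assumes z: "z \<in> S"
  shows "(y_fun x j has_derivative (\<lambda>h. bilin (pvec h) (lagrange_mat j z) (qvec z)
       + bilin (pvec z) (dlagrange j z h) (qvec z)
       + bilin (pvec z) (lagrange_mat j z) (qvec h))) (at z)"
proof -
  have "((\<lambda>z. \<Sum>a\<in>UNIV. \<Sum>b\<in>UNIV. pvec z $ a * lagrange_mat j z $ a $ b * qvec z $ b) has_derivative
     (\<lambda>h. \<Sum>a\<in>UNIV. \<Sum>b\<in>UNIV. pvec z $ a * lagrange_mat j z $ a $ b * qvec h $ b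
       + (pvec z $ a * dlagrange j z h $ a $ b + pvec h $ a * lagrange_mat j z $ a $ b) * qvec z $ b))
     (at z)"
    by (intro has_derivative_sum has_derivative_mult has_derivative_pvec_nth has_derivative_qvec_nth
        has_derivative_lagrange_mat_nth z)
  then show ?thesis
    by (simp add: y_fun_eq_bilin[abs_def] bilin_def algebra_simps sum.distrib)
qed

lemma frechet_derivative_y:
  assumes z: "z \<in> S"
  shows "frechet_derivative (y_fun x j) (at z) h = bilin (pvec h) (lagrange_mat j z) (qvec z)
       + bilin (pvec z) (dlagrange j z h) (qvec z) + bilin (pvec z) (lagrange_mat j z) (qvec h)"
  using fun_cong[OF frechet_derivative_at[OF has_derivative_y[OF z]], of h] by simp

lemma grad_q_y:
  assumes z: "z \<in> S"
  shows "grad_q (y_fun x j) z = pvec z v* lagrange_mat j z"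
proof -
  have "bilin (pvec z) (lagrange_mat j z) (axis c 1) = (pvec z v* lagrange_mat j z) $ c" for c
    by (simp add: bilin_def vector_matrix_mult_def axis_def if_distrib if_distribR mult_ac cong:
        if_cong)
  then show ?thesis
    by (simp add: grad_q_def vec_eq_iff frechet_derivative_y[OF z] pvec_Qdir qvec_Qdir
        dlagrange_Qdir[OF z])
qed

section \<open>The brackets\<close>

definition ygrad :: "'d \<Rightarrow> 'd pt \<Rightarrow> complex^'d^'d" where
  "ygrad i z =
     (\<Sum>k\<in>UNIV-{i}. scale_mat (1 / (x i z - x k z))
        (outer (lagrange_mat i z *v qvec z) (pvec z v* eigenproj k z)))
   + (\<Sum>l\<in>UNIV-{i}. scale_mat (1 / (x i z - x l z))
        (outer (eigenproj l z *v qvec z) (pvec z v* lagrange_mat i z)))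
   + scale_mat (bilin (pvec z) (eigenproj i z) (qvec z))
        (\<Sum>k\<in>UNIV-{i}. scale_mat (lagrange_denom_except i k z) (eigenproj i z - eigenproj k z))"

lemma grad_A_y:
  assumes z: "z \<in> S"
  shows "grad_A (y_fun x i) z = ygrad i z"
proof -
  have "grad_A (y_fun x i) z $ b $ a = ygrad i z $ b $ a" for a b
  proof -
    have "grad_A (y_fun x i) z $ b $ a = bilin (pvec z) (dlagrange i z (Edir a b)) (qvec z)"
      by (simp add: grad_A_def frechet_derivative_y[OF z] pvec_Edir qvec_Edir)
    also have "\<dots> = (\<Sum>k\<in>UNIV-{i}. (1 / (x i z - x k z)) *
              ((pvec z v* eigenproj k z)$a * (lagrange_mat i z *v qvec z)$b))
         + (\<Sum>l\<in>UNIV-{i}. (1 / (x i z - x l z)) *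
              ((pvec z v* lagrange_mat i z)$a * (eigenproj l z *v qvec z)$b))
         + (\<Sum>k\<in>UNIV-{i}.
              (eigenproj i z $ b $ a - eigenproj k z $ b $ a) * lagrange_denom_except i k z)
           * bilin (pvec z) (eigenproj i z) (qvec z)"
      by (simp add: dlagrange_eq[OF z] Amat_Edir bilin_add bilin_sum bilin_scale_mat
          bilin_mult_unit_mat_mult dlagrange_denom_def eigenproj_nth)
    also have "\<dots> = ygrad i z $ b $ a"
      by (simp add: ygrad_def outer_def sum_distrib_left sum_distrib_right mult_ac)
    finally show ?thesis .
  qed
  then show ?thesis
    by (simp add: vec_eq_iff)
qed

lemma sum_eigenproj_except:
  "z \<in> S \<Longrightarrow> (\<Sum>k\<in>UNIV-{i}. eigenproj k z) = mat 1 - eigenproj i z"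
  using sum_eigenproj sum.remove[of UNIV i "\<lambda>k. eigenproj k z"] by (simp add: algebra_simps)

lemma commutator_sum_outer_vector_mult_eigenproj:
  assumes z: "z \<in> S"
  shows "(\<Sum>k\<in>UNIV-{i}. scale_mat (1 / (x i z - x k z))
            (outer (lagrange_mat i z *v v) (u v* eigenproj k z))) ** Amat z
       - Amat z ** (\<Sum>k\<in>UNIV-{i}. scale_mat (1 / (x i z - x k z))
            (outer (lagrange_mat i z *v v) (u v* eigenproj k z)))
       = scale_mat (-1) (outer (lagrange_mat i z *v v) (u - u v* eigenproj i z))"
  using x_distinct[OF z]
  by (subst commutator_weighted_sum[where d="\<lambda>k. x k z - x i z"])
    (auto simp: outer_commutator vector_matrix_mul_assoc eigenproj_mult_Amat[OF z]
      matrix_vector_mul_assoc Amat_mult_lagrange_mat[OF z] vector_mult_scale_mat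
      scale_mat_mult_vector outer_scale_left outer_scale_right scale_mat_diff_left field_simps
      outer_sum_right[symmetric] vector_mult_sum[symmetric] sum_eigenproj_except[OF z]
      vector_mult_diff)

lemma commutator_sum_outer_eigenproj_mult_vector:
  assumes z: "z \<in> S"
  shows "(\<Sum>l\<in>UNIV-{i}. scale_mat (1 / (x i z - x l z))
            (outer (eigenproj l z *v v) (u v* lagrange_mat i z))) ** Amat z
       - Amat z ** (\<Sum>l\<in>UNIV-{i}. scale_mat (1 / (x i z - x l z))
            (outer (eigenproj l z *v v) (u v* lagrange_mat i z)))
       = outer (v - eigenproj i z *v v) (u v* lagrange_mat i z)"
  using x_distinct[OF z]
  by (subst commutator_weighted_sum[where d="\<lambda>l. x i z - x l z"])
    (auto simp: outer_commutator vector_matrix_mul_assoc lagrange_mat_mult_Amat[OF z]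
      matrix_vector_mul_assoc Amat_mult_eigenproj[OF z] vector_mult_scale_mat
      scale_mat_mult_vector outer_scale_left outer_scale_right scale_mat_diff_left
      outer_sum_left[symmetric] sum_mult_vector[symmetric] sum_eigenproj_except[OF z]
      diff_mult_vector)

lemma commutator_ygrad:
  assumes z: "z \<in> S"
  shows "ygrad i z ** Amat z - Amat z ** ygrad i z
       = outer (qvec z) (pvec z v* lagrange_mat i z) - outer (lagrange_mat i z *v qvec z) (pvec z)"
proof -
  let ?p = "pvec z" and ?q = "qvec z" and ?A = "Amat z" and ?P = "lagrange_mat i z"
  let ?C = "\<lambda>k. eigenproj i z - eigenproj k z"
  have diag: "(\<Sum>k\<in>UNIV-{i}. scale_mat (lagrange_denom_except i k z) (?C k)) ** ?A
      - ?A ** (\<Sum>k\<in>UNIV-{i}. scale_mat (lagrange_denom_except i k z) (?C k)) = 0"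
    by (subst commutator_weighted_sum[where d="\<lambda>_. 0" and e=0])
      (auto simp: matrix_diff_rdistrib matrix_diff_ldistrib eigenproj_mult_Amat[OF z]
        Amat_mult_eigenproj[OF z])
  have "ygrad i z ** ?A - ?A ** ygrad i z
      = scale_mat (-1) (outer (?P *v ?q) (?p - ?p v* eigenproj i z))
        + outer (?q - eigenproj i z *v ?q) (?p v* ?P)
        + scale_mat (bilin ?p (eigenproj i z) ?q) 0"
    unfolding ygrad_def commutator_sum_outer_vector_mult_eigenproj[OF z, symmetric]
      commutator_sum_outer_eigenproj_mult_vector[OF z, symmetric] diag[symmetric]
    by (simp add: matrix_add_rdistrib matrix_add_ldistrib scale_mat_mult_left scale_mat_mult_right
        vec_eq_iff algebra_simps)
  moreover have "outer (?P *v ?q) (?p v* eigenproj i z) = outer (eigenproj i z *v ?q) (?p v* ?P)"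
    by (simp add: lagrange_mat_eq_scale_eigenproj[OF z] scale_mat_mult_vector vector_mult_scale_mat
        outer_scale_left outer_scale_right)
  ultimately show ?thesis
    by (simp add: outer_diff_left outer_diff_right vec_eq_iff algebra_simps)
qed

lemma bilin_ygrad:
  "bilin u (ygrad i z) v =
      (\<Sum>k\<in>UNIV-{i}. (1 / (x i z - x k z)) *
         (dotp u (lagrange_mat i z *v qvec z) * dotp (pvec z v* eigenproj k z) v))
    + (\<Sum>l\<in>UNIV-{i}. (1 / (x i z - x l z)) *
         (dotp u (eigenproj l z *v qvec z) * dotp (pvec z v* lagrange_mat i z) v))
    + bilin (pvec z) (eigenproj i z) (qvec z) *
      (\<Sum>k\<in>UNIV-{i}. lagrange_denom_except i k z *
         (bilin u (eigenproj i z) v - bilin u (eigenproj k z) v))"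
  by (simp add: ygrad_def bilin_add bilin_sum bilin_scale_mat bilin_outer bilin_diff)

lemma bilin_lagrange_mat:
  "z \<in> S \<Longrightarrow> bilin u (lagrange_mat i z) v = lagrange_denom i z * bilin u (eigenproj i z) v"
  by (simp add: lagrange_mat_eq_scale_eigenproj bilin_scale_mat)

text \<open>Since y_i = (x_i - x_j) (\<Prod>_{m \<noteq> i, j} (x_i - x_m)) p N_i q, the first two blocks of
  ygrad cancel the third.\<close>
lemma bilin_ygrad_eq_0:
  assumes z: "z \<in> S" and ij: "i \<noteq> j"
    and first: "\<And>k. dotp u (lagrange_mat i z *v qvec z) * dotp (pvec z v* eigenproj k z) v
                    = (if k = j then \<alpha> else 0)"
    and second: "\<And>l. dotp u (eigenproj l z *v qvec z) * dotp (pvec z v* lagrange_mat i z) v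
                    = (if l = j then \<beta> else 0)"
    and third: "\<And>k. bilin u (eigenproj k z) v = (if k = j then \<gamma> else 0)"
    and sum: "\<alpha> + \<beta> = bilin (pvec z) (lagrange_mat i z) (qvec z) * \<gamma>"
  shows "bilin u (ygrad i z) v = 0"
proof -
  let ?d = "x i z - x j z" and ?e = "lagrange_denom_except i j z"
  let ?w = "bilin (pvec z) (eigenproj i z) (qvec z)"
  have t1: "(\<Sum>k\<in>UNIV-{i}. (1 / (x i z - x k z)) *
          (dotp u (lagrange_mat i z *v qvec z) * dotp (pvec z v* eigenproj k z) v))
      = 1 / ?d * \<alpha>"
    unfolding first using not_sym[OF ij] by (rule sum_Diff_mult_delta)
  have t2: "(\<Sum>l\<in>UNIV-{i}. (1 / (x i z - x l z)) *
          (dotp u (eigenproj l z *v qvec z) * dotp (pvec z v* lagrange_mat i z) v))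
      = 1 / ?d * \<beta>"
    unfolding second using not_sym[OF ij] by (rule sum_Diff_mult_delta)
  have "(\<Sum>k\<in>UNIV-{i}. lagrange_denom_except i k z *
          (bilin u (eigenproj i z) v - bilin u (eigenproj k z) v))
      = (\<Sum>k\<in>UNIV-{i}. (- lagrange_denom_except i k z) * (if k = j then \<gamma> else 0))"
    using ij by (intro sum.cong) (auto simp: third)
  also have "\<dots> = - ?e * \<gamma>"
    using ij by (intro sum_Diff_mult_delta) auto
  finally have t3: "(\<Sum>k\<in>UNIV-{i}. lagrange_denom_except i k z *
          (bilin u (eigenproj i z) v - bilin u (eigenproj k z) v)) = - ?e * \<gamma>" .
  have "1 / ?d * \<alpha> + 1 / ?d * \<beta> = (\<alpha> + \<beta>) / ?d"
    by (simp add: add_divide_distrib)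
  also have "\<dots> = ?e * ?w * \<gamma>"
    using bilin_lagrange_mat[OF z] lagrange_denom_eq_mult_except[OF ij, of z] x_distinct[OF z ij]
    by (simp add: sum)
  finally show ?thesis
    unfolding bilin_ygrad t1 t2 t3 by (simp add: algebra_simps)
qed

lemma bilin_vector_mult_lagrange_ygrad:
  assumes z: "z \<in> S" and ij: "i \<noteq> j"
  shows "bilin (pvec z v* lagrange_mat j z) (ygrad i z) (qvec z) = 0"
proof (rule bilin_ygrad_eq_0[OF z ij])
  let ?Y = "\<lambda>k. bilin (pvec z) (lagrange_mat k z) (qvec z)"
  show "dotp (pvec z v* lagrange_mat j z) (lagrange_mat i z *v qvec z) *
      dotp (pvec z v* eigenproj k z) (qvec z) = (if k = j then 0 else 0)" for k
    using lagrange_mat_mult_lagrange_mat[OF z ij] by (simp add: dotp_vector_mult bilin_mult_vector)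
  show "dotp (pvec z v* lagrange_mat j z) (eigenproj l z *v qvec z) *
      dotp (pvec z v* lagrange_mat i z) (qvec z) = (if l = j then ?Y j * ?Y i else 0)" for l
    by (simp add: dotp_vector_mult bilin_mult_vector lagrange_mat_mult_eigenproj[OF z])
  show "bilin (pvec z v* lagrange_mat j z) (eigenproj k z) (qvec z) = (if k = j then ?Y j else 0)"
    for k
    by (simp add: bilin_vector_mult lagrange_mat_mult_eigenproj[OF z])
qed simp

lemma bilin_ygrad_lagrange_mult_vector:
  assumes z: "z \<in> S" and ij: "i \<noteq> j"
  shows "bilin (pvec z) (ygrad j z) (lagrange_mat i z *v qvec z) = 0"
proof (rule bilin_ygrad_eq_0[OF z not_sym[OF ij]])
  let ?Y = "\<lambda>k. bilin (pvec z) (lagrange_mat k z) (qvec z)"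
  show "dotp (pvec z) (lagrange_mat j z *v qvec z) *
      dotp (pvec z v* eigenproj k z) (lagrange_mat i z *v qvec z)
      = (if k = i then ?Y j * ?Y i else 0)" for k
    by (simp add: dotp_vector_mult dotp_mult_vector bilin_mult_vector bilin_vector_mult
        eigenproj_mult_lagrange_mat[OF z])
  show "dotp (pvec z) (eigenproj l z *v qvec z) *
      dotp (pvec z v* lagrange_mat j z) (lagrange_mat i z *v qvec z) = (if l = i then 0 else 0)" for l
    using lagrange_mat_mult_lagrange_mat[OF z ij] by (simp add: dotp_vector_mult bilin_mult_vector)
  show "bilin (pvec z) (eigenproj k z) (lagrange_mat i z *v qvec z) = (if k = i then ?Y i else 0)"
    for k
    by (simp add: bilin_mult_vector eigenproj_mult_lagrange_mat[OF z])
qed simp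

lemma grad_q_x: "z \<in> S \<Longrightarrow> grad_q (x i) z = 0"
  using dx_Qdir by (simp add: grad_q_def vec_eq_iff dx_def)

lemma eigenproj_commute_Amat:
  "z \<in> S \<Longrightarrow> eigenproj i z ** Amat z = Amat z ** eigenproj i z"
  by (simp add: eigenproj_mult_Amat Amat_mult_eigenproj)

lemma pbracket_x_x: "z \<in> S \<Longrightarrow> pbracket (x i) (x j) z = 0"
  using pbracket_commuting_grad[of "x i" z "x j"]
  by (simp add: eigenproj_def[symmetric] eigenproj_commute_Amat grad_q_x)

lemma pbracket_x_y:
  assumes z: "z \<in> S"
  shows "pbracket (x i) (y_fun x j) z = (if i = j then y_fun x j z else 0)"
proof -
  have "pbracket (x i) (y_fun x j) z = bilin (pvec z v* lagrange_mat j z) (eigenproj i z) (qvec z)"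
    using pbracket_commuting_grad[of "x i" z "y_fun x j"]
    by (simp add: eigenproj_def[symmetric] eigenproj_commute_Amat[OF z] grad_q_x[OF z]
        grad_q_y[OF z])
  also have "\<dots> = (if i = j then y_fun x j z else 0)"
    by (simp add: bilin_vector_mult lagrange_mat_mult_eigenproj[OF z] y_fun_eq_bilin)
  finally show ?thesis .
qed

lemma pbracket_y_y:
  assumes z: "z \<in> S"
  shows "pbracket (y_fun x i) (y_fun x j) z = 0"
proof (cases "i = j")
  case True
  then show ?thesis
    by (simp add: pbracket_self)
next
  case False
  let ?p = "pvec z" and ?q = "qvec z"
  have "pbracket (y_fun x i) (y_fun x j) z
      = trace ((outer ?q (?p v* lagrange_mat i z) - outer (lagrange_mat i z *v ?q) ?p) ** ygrad j z)
        + trace (outer ?q (?p v* lagrange_mat j z) ** ygrad i z)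
        - trace (outer ?q (?p v* lagrange_mat i z) ** ygrad j z)"
    by (simp add: pbracket_trace_form grad_A_y[OF z] grad_q_y[OF z] commutator_ygrad[OF z])
  also have "\<dots> = bilin (?p v* lagrange_mat j z) (ygrad i z) ?q
      - bilin ?p (ygrad j z) (lagrange_mat i z *v ?q)"
    by (simp add: matrix_diff_rdistrib trace_sub trace_outer_mult)
  also have "\<dots> = 0"
    using bilin_vector_mult_lagrange_ygrad[OF z False] bilin_ygrad_lagrange_mult_vector[OF z False]
    by simp
  finally show ?thesis .
qed

end

theorem proposition3p7:
  fixes S :: "'d::finite pt set"
    and x :: "'d \<Rightarrow> 'd pt \<Rightarrow> complex"
  assumes "open S"
    and "\<And>i. x i differentiable_on S"
    and "\<And>z i j. z \<in> S \<Longrightarrow> i \<noteq> j \<Longrightarrow> x i z \<noteq> x j z"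
    and "\<And>z t. z \<in> S \<Longrightarrow> det (mat t - Amat z) = (\<Prod>i\<in>UNIV. t - x i z)"
    and "z \<in> S"
  shows "pbracket (x i) (x j) z = 0
       \<and> pbracket (y_fun x i) (y_fun x j) z = 0
       \<and> pbracket (x i) (y_fun x j) z = (if i = j then y_fun x j z else 0)"
proof -
  interpret distinct_eigenvalues S x
    by unfold_locales (use assms in auto)
  show ?thesis
    using pbracket_x_x pbracket_y_y pbracket_x_y \<open>z \<in> S\<close> by blast
qed

end
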